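(* Let $\Gamma$ be a graph and let $K$ be a finite graph. (1) If $\Gamma$ contains a finite set of vertices $X$ such that every subgraph of $\Gamma$ isomorphic to $K$ has at least one vertex in $X$, then $\Gamma$ contains a finite set of vertices $Y$, invariant under all automorphisms of $\Gamma$, such that every subgraph of $\Gamma$ isomorphic to $K$ has at least one vertex in $Y$, and $|Y|\le |X|\cdot(\text{number of vertices of }K)$. (2) If $\Gamma$ contains a finite set of edges $X$ such that every subgraph of $\Gamma$ isomorphic to $K$ has at least one edge in $X$, then $\Gamma$ contains a finite set of edges $Y$, invariant under all automorphisms of $\Gamma$, such that every subgraph of $\Gamma$ isomorphic to $K$ has at least one edge in $Y$, and $|Y|\le |X|\cdot(\text{number of edges of }K)$.
   Context: "Graph" may be understood in any of the usual senses (directed, undirected, or mixed; multiple edges and/or loops allowed or not), fixed throughout; isomorphisms and automorphisms preserve the corresponding structure (e.g. edge directions for directed graphs). "Subgraph" means an arbitrary (not necessarily induced) subgraph. $\Gamma$ may be infinite. *)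

theory Defs
  imports Main
begin

text \<open>Convention: a graph is a directed graph without multiple edges, loops allowed,
  given by a (possibly infinite) vertex set and an arc relation on it.\<close>

record 'a graph =
  verts :: "'a set"
  arcs  :: "('a \<times> 'a) set"

definition wf_graph :: "'a graph \<Rightarrow> bool" where
  "wf_graph G \<longleftrightarrow> arcs G \<subseteq> verts G \<times> verts G"

definition finite_graph :: "'a graph \<Rightarrow> bool" where
  "finite_graph G \<longleftrightarrow> wf_graph G \<and> finite (verts G)"

definition subgraph :: "'a graph \<Rightarrow> 'a graph \<Rightarrow> bool" where
  "subgraph H G \<longleftrightarrow> wf_graph H \<and> verts H \<subseteq> verts G \<and> arcs H \<subseteq> arcs G"

definition graph_iso :: "('b \<Rightarrow> 'a) \<Rightarrow> 'b graph \<Rightarrow> 'a graph \<Rightarrow> bool" where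
  "graph_iso f K H \<longleftrightarrow> bij_betw f (verts K) (verts H) \<and>
     (\<forall>u\<in>verts K. \<forall>v\<in>verts K. (u, v) \<in> arcs K \<longleftrightarrow> (f u, f v) \<in> arcs H)"

definition isomorphic :: "'b graph \<Rightarrow> 'a graph \<Rightarrow> bool" where
  "isomorphic K H \<longleftrightarrow> (\<exists>f. graph_iso f K H)"

definition automorphism :: "('a \<Rightarrow> 'a) \<Rightarrow> 'a graph \<Rightarrow> bool" where
  "automorphism f G \<longleftrightarrow> graph_iso f G G"

definition arc_map :: "('a \<Rightarrow> 'b) \<Rightarrow> 'a \<times> 'a \<Rightarrow> 'b \<times> 'b" where
  "arc_map f e = (f (fst e), f (snd e))"

definition vertex_set_invariant :: "'a graph \<Rightarrow> 'a set \<Rightarrow> bool" where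
  "vertex_set_invariant G Y \<longleftrightarrow> (\<forall>f. automorphism f G \<longrightarrow> f ` Y = Y)"

definition arc_set_invariant :: "'a graph \<Rightarrow> ('a \<times> 'a) set \<Rightarrow> bool" where
  "arc_set_invariant G Y \<longleftrightarrow> (\<forall>f. automorphism f G \<longrightarrow> arc_map f ` Y = Y)"

end

theory Submission
  imports Defs
begin

(* Call a finite set meeting every copy of K a transversal.  Since copies are finite, only
   finitely many transversals have the minimum size tau, and every automorphism permutes them.
   Let N be their number, w(y) the number of them containing y, m the number of vertices
   (for (2): of arcs) of K, and let Y consist of the points with m * w(y) >= N; Y is invariant
   because w is.  Each copy S meets every minimum transversal, so the weights on S add up to
   at least N, and since |S| = m some point of S lies in Y.  Summing w over all points gives
   N * tau, hence |Y| <= m * tau <= m * |X|.  Only the copies as a family of finite sets of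
   bounded size matter, so the same argument applies to vertex sets and to arc sets. *)

section \<open>Transversals of set systems\<close>

definition transversal :: "'v set \<Rightarrow> 'v set set \<Rightarrow> 'v set \<Rightarrow> bool" where
  "transversal V F T \<longleftrightarrow> T \<subseteq> V \<and> finite T \<and> (\<forall>S\<in>F. S \<inter> T \<noteq> {})"

definition minimal_transversal :: "'v set \<Rightarrow> 'v set set \<Rightarrow> 'v set \<Rightarrow> bool" where
  "minimal_transversal V F T \<longleftrightarrow>
     transversal V F T \<and> (\<forall>T'\<subseteq>T. transversal V F T' \<longrightarrow> T' = T)"

definition minimum_transversal :: "'v set \<Rightarrow> 'v set set \<Rightarrow> 'v set \<Rightarrow> bool" where
  "minimum_transversal V F T \<longleftrightarrow>
     transversal V F T \<and> (\<forall>T'. transversal V F T' \<longrightarrow> card T \<le> card T')"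

lemma minimum_transversal_exists:
  assumes "transversal V F X"
  obtains T where "minimum_transversal V F T" "card T \<le> card X"
  using ex_has_least_nat[of "transversal V F" X card] assms
  unfolding minimum_transversal_def by blast

lemma minimum_transversal_card_eq:
  "minimum_transversal V F T \<Longrightarrow> minimum_transversal V F T' \<Longrightarrow> card T = card T'"
  unfolding minimum_transversal_def by (meson le_antisym)

lemma minimum_imp_minimal_transversal:
  assumes "minimum_transversal V F T"
  shows "minimal_transversal V F T"
  using assms card_seteq
  unfolding minimum_transversal_def minimal_transversal_def transversal_def by metis

text \<open>A minimal transversal containing \<open>A\<close> but not yet equal to it must pick a point of
  some member of \<open>F\<close> missed by \<open>A\<close>; this branching has finite width and bounded depth.\<close>

lemma finite_minimal_transversals_extending:
  assumes "\<forall>S\<in>F. finite S" and "finite A"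
  shows "finite {T. minimal_transversal V F T \<and> A \<subseteq> T \<and> card (T - A) \<le> k}"
  using assms(2)
proof (induction k arbitrary: A)
  case 0
  have "{T. minimal_transversal V F T \<and> A \<subseteq> T \<and> card (T - A) \<le> 0} \<subseteq> {A}"
    by (auto simp: minimal_transversal_def transversal_def)
  then show ?case by (rule finite_subset) simp
next
  case (Suc k)
  let ?ext = "\<lambda>A k. {T. minimal_transversal V F T \<and> A \<subseteq> T \<and> card (T - A) \<le> k}"
  show ?case
  proof (cases "\<forall>S\<in>F. S \<inter> A \<noteq> {}")
    case True
    have "?ext A (Suc k) \<subseteq> {A}"
    proof
      fix T assume T: "T \<in> ?ext A (Suc k)"
      then have "transversal V F A"
        using True Suc.prems by (auto simp: minimal_transversal_def transversal_def)
      with T show "T \<in> {A}" unfolding minimal_transversal_def by blast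
    qed
    then show ?thesis by (rule finite_subset) simp
  next
    case False
    then obtain S where S: "S \<in> F" "S \<inter> A = {}" by blast
    have "?ext A (Suc k) \<subseteq> (\<Union>s\<in>S. ?ext (insert s A) k)"
    proof
      fix T assume T: "T \<in> ?ext A (Suc k)"
      then have "transversal V F T" by (simp add: minimal_transversal_def)
      then obtain s where s: "s \<in> S" "s \<in> T" and "finite T"
        using S(1) by (auto simp: transversal_def)
      have "T - insert s A = (T - A) - {s}" and "s \<in> T - A"
        using s S(2) by auto
      then have "card (T - insert s A) = card (T - A) - 1"
        using \<open>finite T\<close> by simp
      with T s show "T \<in> (\<Union>s\<in>S. ?ext (insert s A) k)" by auto
    qed
    moreover have "finite (\<Union>s\<in>S. ?ext (insert s A) k)"
      using assms(1) S(1) Suc.IH Suc.prems by blast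
    ultimately show ?thesis by (rule finite_subset)
  qed
qed

lemma finite_minimal_transversals:
  assumes "\<forall>S\<in>F. finite S"
  shows "finite {T. minimal_transversal V F T \<and> card T \<le> k}"
  using finite_minimal_transversals_extending[OF assms, of "{}"] by simp

lemma finite_minimum_transversals:
  assumes "\<forall>S\<in>F. finite S"
  shows "finite {T. minimum_transversal V F T}"
proof (cases "\<exists>T0. minimum_transversal V F T0")
  case True
  then obtain T0 where T0: "minimum_transversal V F T0" ..
  have "{T. minimum_transversal V F T} \<subseteq> {T. minimal_transversal V F T \<and> card T \<le> card T0}"
    using minimum_transversal_card_eq[OF _ T0] minimum_imp_minimal_transversal by auto
  then show ?thesis
    using finite_minimal_transversals[OF assms] by (rule finite_subset)
qed simp

definition popular :: "nat \<Rightarrow> 'v set set \<Rightarrow> 'v set" where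
  "popular m M = {y \<in> \<Union>M. card M \<le> m * card {T\<in>M. y \<in> T}}"

lemma sum_card_incidences:
  assumes "finite A" and "finite M"
  shows "(\<Sum>y\<in>A. card {T\<in>M. y \<in> T}) = (\<Sum>T\<in>M. card (A \<inter> T))"
proof -
  have "(\<Sum>y\<in>A. card {T\<in>M. y \<in> T}) = (\<Sum>y\<in>A. \<Sum>T\<in>M. if y \<in> T then 1 else 0)"
    using assms(2) by (simp add: sum.inter_filter[symmetric])
  also have "\<dots> = (\<Sum>T\<in>M. \<Sum>y\<in>A. if y \<in> T then 1 else 0)"
    by (rule sum.swap)
  also have "\<dots> = (\<Sum>T\<in>M. card (A \<inter> T))"
    using assms(1) by (simp add: sum.If_cases)
  finally show ?thesis .
qed

lemma popular_meets:
  assumes "finite M" and "M \<noteq> {}" and "finite S" and "S \<noteq> {}" and "card S \<le> m"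
    and "\<forall>T\<in>M. S \<inter> T \<noteq> {}"
  shows "S \<inter> popular m M \<noteq> {}"
proof
  assume disjoint: "S \<inter> popular m M = {}"
  have less: "m * card {T\<in>M. y \<in> T} < card M" if "y \<in> S" for y
  proof (cases "y \<in> \<Union>M")
    case True
    then show ?thesis using disjoint that by (auto simp: popular_def)
  next
    case False
    then have "{T\<in>M. y \<in> T} = {}" by blast
    then have "card {T\<in>M. y \<in> T} = 0" by (simp only: card.empty)
    with assms(1,2) show ?thesis by (metis card_gt_0_iff mult_0_right)
  qed
  have "card M = (\<Sum>T\<in>M. 1)" by simp
  also have "\<dots> \<le> (\<Sum>T\<in>M. card (S \<inter> T))"
    using assms(3,6) by (intro sum_mono) (simp add: Suc_le_eq card_gt_0_iff)
  also have "\<dots> = (\<Sum>y\<in>S. card {T\<in>M. y \<in> T})"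
    by (rule sum_card_incidences[OF assms(3,1), symmetric])
  finally have "m * card M \<le> (\<Sum>y\<in>S. m * card {T\<in>M. y \<in> T})"
    by (simp add: sum_distrib_left[symmetric])
  also have "\<dots> < (\<Sum>y\<in>S. card M)"
    using assms(3,4) less by (intro sum_strict_mono) auto
  also have "\<dots> \<le> m * card M"
    using assms(5) by simp
  finally show False by simp
qed

lemma card_popular_le:
  assumes "finite M" and "M \<noteq> {}" and "\<forall>T\<in>M. finite T \<and> card T = k"
  shows "card (popular m M) \<le> m * k"
proof -
  have fin: "finite (\<Union>M)" using assms(1,3) by blast
  have "card (popular m M) * card M = (\<Sum>y\<in>popular m M. card M)" by simp
  also have "\<dots> \<le> (\<Sum>y\<in>popular m M. m * card {T\<in>M. y \<in> T})"
    by (rule sum_mono) (simp add: popular_def)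
  also have "\<dots> \<le> (\<Sum>y\<in>\<Union>M. m * card {T\<in>M. y \<in> T})"
    using fin by (intro sum_mono2) (auto simp: popular_def)
  also have "\<dots> = m * (\<Sum>y\<in>\<Union>M. card {T\<in>M. y \<in> T})"
    by (simp add: sum_distrib_left)
  also have "\<dots> = m * (\<Sum>T\<in>M. card (\<Union>M \<inter> T))"
    using fin assms(1) by (simp add: sum_card_incidences)
  also have "\<dots> = m * k * card M"
    using assms(3) by (simp add: Int_absorb1 Union_upper)
  finally show ?thesis
    using assms(1,2) by (simp add: card_gt_0_iff)
qed

lemma image_popular:
  assumes inj: "inj_on \<sigma> (\<Union>M)" and perm: "(`) \<sigma> ` M = M"
  shows "\<sigma> ` popular m M = popular m M"
proof -
  have "{T\<in>M. \<sigma> y \<in> T} = (`) \<sigma> ` {T\<in>M. y \<in> T}" if "y \<in> \<Union>M" for y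
  proof
    show "(`) \<sigma> ` {T\<in>M. y \<in> T} \<subseteq> {T\<in>M. \<sigma> y \<in> T}"
      using perm by blast
    show "{T\<in>M. \<sigma> y \<in> T} \<subseteq> (`) \<sigma> ` {T\<in>M. y \<in> T}"
    proof
      fix T assume T: "T \<in> {T\<in>M. \<sigma> y \<in> T}"
      then obtain T' where T': "T' \<in> M" "T = \<sigma> ` T'" using perm by blast
      then have "\<sigma> y \<in> \<sigma> ` T'" and "T' \<subseteq> \<Union>M" using T by auto
      then have "y \<in> T'" using inj_on_image_mem_iff[OF inj that] by blast
      with T' show "T \<in> (`) \<sigma> ` {T\<in>M. y \<in> T}" by blast
    qed
  qed
  moreover have "inj_on ((`) \<sigma>) {T\<in>M. y \<in> T}" for y
    using inj by (auto intro: inj_on_image inj_on_subset)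
  ultimately have weight: "card {T\<in>M. \<sigma> y \<in> T} = card {T\<in>M. y \<in> T}" if "y \<in> \<Union>M" for y
    using that by (simp add: card_image)
  have onto: "\<sigma> ` \<Union>M = \<Union>M"
    using perm by (metis image_Union)
  show ?thesis
  proof
    show "\<sigma> ` popular m M \<subseteq> popular m M"
    proof
      fix x assume "x \<in> \<sigma> ` popular m M"
      then obtain y where y: "y \<in> popular m M" "x = \<sigma> y" by blast
      then have "y \<in> \<Union>M" by (simp add: popular_def)
      with y onto weight[OF this] show "x \<in> popular m M" by (auto simp: popular_def)
    qed
    show "popular m M \<subseteq> \<sigma> ` popular m M"
    proof
      fix y assume y: "y \<in> popular m M"
      then obtain z where z: "z \<in> \<Union>M" "y = \<sigma> z"
        using onto by (auto simp: popular_def)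
      with y weight[OF z(1)] show "y \<in> \<sigma> ` popular m M"
        by (auto simp: popular_def)
    qed
  qed
qed

definition set_system_symmetry :: "'v set \<Rightarrow> 'v set set \<Rightarrow> ('v \<Rightarrow> 'v) \<Rightarrow> bool" where
  "set_system_symmetry V F \<sigma> \<longleftrightarrow> inj_on \<sigma> V \<and> \<sigma> ` V \<subseteq> V \<and> F \<subseteq> (`) \<sigma> ` F"

lemma transversal_image:
  assumes "set_system_symmetry V F \<sigma>" and "transversal V F T"
  shows "transversal V F (\<sigma> ` T)"
proof -
  have "S \<inter> \<sigma> ` T \<noteq> {}" if "S \<in> F" for S
  proof -
    obtain S' where "S' \<in> F" "S = \<sigma> ` S'"
      using assms(1) \<open>S \<in> F\<close> by (auto simp: set_system_symmetry_def)
    with assms(2) show ?thesis by (auto simp: transversal_def)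
  qed
  with assms show ?thesis by (auto simp: transversal_def set_system_symmetry_def)
qed

lemma minimum_transversal_image:
  assumes "set_system_symmetry V F \<sigma>" and "minimum_transversal V F T"
  shows "minimum_transversal V F (\<sigma> ` T)"
proof -
  have "card (\<sigma> ` T) = card T"
    using assms by (meson card_image inj_on_subset minimum_transversal_def
        set_system_symmetry_def transversal_def)
  with assms show ?thesis
    by (simp add: minimum_transversal_def transversal_image)
qed

lemma image_minimum_transversals:
  assumes "set_system_symmetry V F \<sigma>" and "\<forall>S\<in>F. finite S"
  shows "(`) \<sigma> ` {T. minimum_transversal V F T} = {T. minimum_transversal V F T}"
proof (rule endo_inj_surj)
  show "finite {T. minimum_transversal V F T}"
    using assms(2) by (rule finite_minimum_transversals)
  show "(`) \<sigma> ` {T. minimum_transversal V F T} \<subseteq> {T. minimum_transversal V F T}"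
    using assms(1) minimum_transversal_image by blast
  have "\<Union>{T. minimum_transversal V F T} \<subseteq> V"
    by (auto simp: minimum_transversal_def transversal_def)
  then show "inj_on ((`) \<sigma>) {T. minimum_transversal V F T}"
    using assms(1) by (auto simp: set_system_symmetry_def intro: inj_on_image inj_on_subset)
qed

lemma invariant_transversal_exists:
  assumes "\<forall>S\<in>F. finite S \<and> card S \<le> m" and "transversal V F X"
  obtains Y where "transversal V F Y" and "\<And>\<sigma>. set_system_symmetry V F \<sigma> \<Longrightarrow> \<sigma> ` Y = Y"
    and "card Y \<le> card X * m"
proof
  obtain T0 where T0: "minimum_transversal V F T0" "card T0 \<le> card X"
    using assms(2) by (rule minimum_transversal_exists)
  define M where "M = {T. minimum_transversal V F T}"
  have finM: "finite M"
    unfolding M_def using assms(1) by (simp add: finite_minimum_transversals)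
  have M_ne: "M \<noteq> {}" using T0(1) by (auto simp: M_def)
  have M_card: "\<forall>T\<in>M. finite T \<and> card T = card T0"
    using T0(1) minimum_transversal_card_eq
    by (auto simp: M_def minimum_transversal_def transversal_def)
  have UM_sub: "\<Union>M \<subseteq> V"
    by (auto simp: M_def minimum_transversal_def transversal_def)
  have UM_fin: "finite (\<Union>M)"
    using finM M_card by blast
  have "S \<inter> popular m M \<noteq> {}" if "S \<in> F" for S
  proof (rule popular_meets[OF finM M_ne])
    show "finite S" "card S \<le> m" using assms(1) that by auto
    show "S \<noteq> {}" using assms(2) that by (auto simp: transversal_def)
    show "\<forall>T\<in>M. S \<inter> T \<noteq> {}"
      using that by (auto simp: M_def minimum_transversal_def transversal_def)
  qed
  moreover have "popular m M \<subseteq> \<Union>M" by (auto simp: popular_def)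
  ultimately show "transversal V F (popular m M)"
    using UM_sub UM_fin by (auto simp: transversal_def intro: finite_subset)
  show "\<sigma> ` popular m M = popular m M" if "set_system_symmetry V F \<sigma>" for \<sigma>
  proof (rule image_popular)
    show "inj_on \<sigma> (\<Union>M)"
      using that UM_sub by (auto simp: set_system_symmetry_def intro: inj_on_subset)
    show "(`) \<sigma> ` M = M"
      unfolding M_def using that assms(1) by (simp add: image_minimum_transversals)
  qed
  have "card (popular m M) \<le> m * card T0"
    using finM M_ne M_card by (rule card_popular_le)
  also have "\<dots> \<le> card X * m"
    using T0(2) by (simp add: mult.commute)
  finally show "card (popular m M) \<le> card X * m" .
qed

section \<open>Copies of a graph and its automorphisms\<close>

lemma arc_map_eq_map_prod: "arc_map f = map_prod f f"
  by (rule ext) (simp add: arc_map_def map_prod_def split_beta)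

definition graph_image :: "('a \<Rightarrow> 'b) \<Rightarrow> 'a graph \<Rightarrow> 'b graph" where
  "graph_image f H = \<lparr>verts = f ` verts H, arcs = arc_map f ` arcs H\<rparr>"

definition copies :: "'a graph \<Rightarrow> 'b graph \<Rightarrow> 'a graph set" where
  "copies G K = {H. subgraph H G \<and> isomorphic K H}"

lemma graph_iso_comp:
  assumes "graph_iso g K H" and "graph_iso f H L"
  shows "graph_iso (f \<circ> g) K L"
  unfolding graph_iso_def
proof (intro conjI ballI)
  have g: "bij_betw g (verts K) (verts H)" and f: "bij_betw f (verts H) (verts L)"
    using assms by (simp_all add: graph_iso_def)
  then show "bij_betw (f \<circ> g) (verts K) (verts L)"
    by (rule bij_betw_trans)
  fix u v assume "u \<in> verts K" "v \<in> verts K"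
  moreover have "g u \<in> verts H" "g v \<in> verts H"
    using g calculation by (simp_all add: bij_betw_apply)
  ultimately show "(u, v) \<in> arcs K \<longleftrightarrow> ((f \<circ> g) u, (f \<circ> g) v) \<in> arcs L"
    using assms unfolding graph_iso_def comp_def by blast
qed

lemma graph_iso_graph_image:
  assumes "wf_graph H" and inj: "inj_on f (verts H)"
  shows "graph_iso f H (graph_image f H)"
proof -
  have inj_pairs: "inj_on (arc_map f) (verts H \<times> verts H)"
    unfolding arc_map_eq_map_prod using inj inj by (rule map_prod_inj_on)
  have "arcs H \<subseteq> verts H \<times> verts H"
    using assms(1) by (simp add: wf_graph_def)
  then have "(u, v) \<in> arcs H \<longleftrightarrow> arc_map f (u, v) \<in> arc_map f ` arcs H"
    if "u \<in> verts H" "v \<in> verts H" for u v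
    using inj_on_image_mem_iff[OF inj_pairs] that by blast
  moreover have "bij_betw f (verts H) (f ` verts H)"
    using inj by (rule inj_on_imp_bij_betw)
  ultimately show ?thesis
    by (simp add: graph_iso_def graph_image_def arc_map_def)
qed

lemma isomorphic_graph_image:
  assumes "isomorphic K H" and "wf_graph H" and "inj_on f (verts H)"
  shows "isomorphic K (graph_image f H)"
  using assms graph_iso_comp graph_iso_graph_image unfolding isomorphic_def by blast

lemma subgraph_graph_image:
  assumes "automorphism f G" and "subgraph H G"
  shows "subgraph (graph_image f H) G"
proof -
  have f: "f ` verts G = verts G"
    and f_arcs: "\<forall>u\<in>verts G. \<forall>v\<in>verts G. (u, v) \<in> arcs G \<longleftrightarrow> (f u, f v) \<in> arcs G"
    using assms(1) by (auto simp: automorphism_def graph_iso_def bij_betw_def)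
  have H: "verts H \<subseteq> verts G" "arcs H \<subseteq> arcs G" "arcs H \<subseteq> verts H \<times> verts H"
    using assms(2) by (auto simp: subgraph_def wf_graph_def)
  have "f ` verts H \<subseteq> verts G"
    using H(1) f by blast
  moreover have "arc_map f ` arcs H \<subseteq> arcs G"
  proof
    fix e assume "e \<in> arc_map f ` arcs H"
    then obtain u v where "(u, v) \<in> arcs H" "e = (f u, f v)"
      by (auto simp: arc_map_def)
    with H f_arcs show "e \<in> arcs G" by blast
  qed
  moreover have "arc_map f ` arcs H \<subseteq> f ` verts H \<times> f ` verts H"
    using H(3) by (auto simp: arc_map_def)
  ultimately show ?thesis
    by (simp add: subgraph_def wf_graph_def graph_image_def)
qed

lemma automorphism_inv_into:
  assumes "automorphism f G"
  shows "automorphism (inv_into (verts G) f) G"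
proof -
  let ?g = "inv_into (verts G) f"
  have bij: "bij_betw f (verts G) (verts G)"
    and arcs: "\<forall>u\<in>verts G. \<forall>v\<in>verts G. (u, v) \<in> arcs G \<longleftrightarrow> (f u, f v) \<in> arcs G"
    using assms by (auto simp: automorphism_def graph_iso_def)
  have bij_inv: "bij_betw ?g (verts G) (verts G)"
    using bij by (rule bij_betw_inv_into)
  have "(u, v) \<in> arcs G \<longleftrightarrow> (?g u, ?g v) \<in> arcs G" if "u \<in> verts G" "v \<in> verts G" for u v
  proof -
    have "?g u \<in> verts G" "?g v \<in> verts G"
      using bij_inv that by (simp_all add: bij_betw_apply)
    moreover have "f (?g u) = u" "f (?g v) = v"
      using bij that by (simp_all add: bij_betw_inv_into_right)
    ultimately show ?thesis
      using arcs by metis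
  qed
  with bij_inv show ?thesis
    by (simp add: automorphism_def graph_iso_def)
qed

lemma graph_image_comp: "graph_image f (graph_image g H) = graph_image (f \<circ> g) H"
  by (simp add: graph_image_def arc_map_def image_image)

lemma graph_image_id_on:
  assumes "wf_graph H" and "\<forall>x\<in>verts H. f x = x"
  shows "graph_image f H = H"
proof -
  have "arc_map f ` arcs H = arcs H"
    using assms by (force simp: wf_graph_def arc_map_def)
  with assms(2) show ?thesis
    by (simp add: graph_image_def)
qed

lemma automorphism_inj_on_subgraph:
  assumes "automorphism f G" and "subgraph H G"
  shows "inj_on f (verts H)"
  using assms
  by (auto simp: automorphism_def graph_iso_def subgraph_def bij_betw_def intro: inj_on_subset)

lemma graph_image_copy:
  assumes "automorphism f G" and "H \<in> copies G K"
  shows "graph_image f H \<in> copies G K"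
proof -
  have H: "subgraph H G" "isomorphic K H" "wf_graph H"
    using assms(2) by (simp_all add: copies_def subgraph_def)
  have "subgraph (graph_image f H) G"
    using assms(1) H(1) by (rule subgraph_graph_image)
  moreover have "isomorphic K (graph_image f H)"
    using H(2,3) automorphism_inj_on_subgraph[OF assms(1) H(1)] by (rule isomorphic_graph_image)
  ultimately show ?thesis
    by (simp add: copies_def)
qed

lemma graph_image_copies:
  assumes "automorphism f G"
  shows "graph_image f ` copies G K = copies G K"
proof
  show "graph_image f ` copies G K \<subseteq> copies G K"
    using assms graph_image_copy by blast
  show "copies G K \<subseteq> graph_image f ` copies G K"
  proof
    fix H assume H: "H \<in> copies G K"
    let ?g = "inv_into (verts G) f"
    have "f (?g x) = x" if "x \<in> verts H" for x
    proof -
      have "x \<in> f ` verts G"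
        using assms H that
        by (auto simp: automorphism_def graph_iso_def copies_def subgraph_def bij_betw_def)
      then show ?thesis by (rule f_inv_into_f)
    qed
    then have "graph_image (f \<circ> ?g) H = H"
      using H by (intro graph_image_id_on) (simp_all add: copies_def subgraph_def)
    then have "H = graph_image f (graph_image ?g H)"
      by (simp add: graph_image_comp)
    moreover have "graph_image ?g H \<in> copies G K"
      using automorphism_inv_into[OF assms] H by (rule graph_image_copy)
    ultimately show "H \<in> graph_image f ` copies G K" by blast
  qed
qed

lemma graph_iso_bij_betw_arcs:
  assumes "wf_graph K" and "wf_graph H" and "graph_iso g K H"
  shows "bij_betw (arc_map g) (arcs K) (arcs H)"
proof -
  have bij: "bij_betw g (verts K) (verts H)"
    and iso: "\<forall>u\<in>verts K. \<forall>v\<in>verts K. (u, v) \<in> arcs K \<longleftrightarrow> (g u, g v) \<in> arcs H"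
    using assms(3) by (simp_all add: graph_iso_def)
  have K: "arcs K \<subseteq> verts K \<times> verts K" and H: "arcs H \<subseteq> verts H \<times> verts H"
    using assms(1,2) by (simp_all add: wf_graph_def)
  have "inj_on g (verts K)"
    using bij by (simp add: bij_betw_def)
  then have "inj_on (arc_map g) (arcs K)"
    unfolding arc_map_eq_map_prod using K by (blast intro: map_prod_inj_on inj_on_subset)
  moreover have "arc_map g ` arcs K = arcs H"
  proof
    show "arc_map g ` arcs K \<subseteq> arcs H"
      using K iso by (auto simp: arc_map_def)
    show "arcs H \<subseteq> arc_map g ` arcs K"
    proof
      fix e assume e: "e \<in> arcs H"
      then obtain a b where "e = (a, b)" "a \<in> g ` verts K" "b \<in> g ` verts K"
        using H bij by (auto simp: bij_betw_def)
      then obtain u v where "u \<in> verts K" "v \<in> verts K" "e = (g u, g v)"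
        by blast
      with e iso show "e \<in> arc_map g ` arcs K"
        by (auto simp: arc_map_def image_iff intro!: bexI[of _ "(u, v)"])
    qed
  qed
  ultimately show ?thesis
    by (simp add: bij_betw_def)
qed

lemma card_copy:
  assumes "finite_graph K" and "H \<in> copies G K"
  shows "finite (verts H)" "card (verts H) = card (verts K)"
    and "finite (arcs H)" "card (arcs H) = card (arcs K)"
proof -
  obtain g where g: "graph_iso g K H"
    using assms(2) by (auto simp: copies_def isomorphic_def)
  have "wf_graph K" "finite (verts K)" "wf_graph H"
    using assms by (simp_all add: finite_graph_def copies_def subgraph_def)
  moreover from this have "finite (arcs K)"
    by (simp add: wf_graph_def finite_subset)
  moreover have "bij_betw g (verts K) (verts H)"
    using g by (simp add: graph_iso_def)
  moreover note graph_iso_bij_betw_arcs[OF _ _ g]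
  ultimately show "finite (verts H)" "card (verts H) = card (verts K)"
    and "finite (arcs H)" "card (arcs H) = card (arcs K)"
    by (auto simp: bij_betw_finite bij_betw_same_card)
qed

lemma automorphism_vertex_symmetry:
  assumes "automorphism f G"
  shows "set_system_symmetry (verts G) (verts ` copies G K) f"
proof -
  have "(`) f ` verts ` copies G K = verts ` graph_image f ` copies G K"
    by (simp add: image_image graph_image_def)
  with assms show ?thesis
    by (auto simp: set_system_symmetry_def graph_image_copies automorphism_def graph_iso_def
        bij_betw_def)
qed

lemma automorphism_arc_symmetry:
  assumes "wf_graph G" and "automorphism f G"
  shows "set_system_symmetry (arcs G) (arcs ` copies G K) (arc_map f)"
proof -
  have "inj_on f (verts G)"
    using assms(2) by (simp add: automorphism_def graph_iso_def bij_betw_def)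
  moreover have "arcs G \<subseteq> verts G \<times> verts G"
    using assms(1) by (simp add: wf_graph_def)
  ultimately have "inj_on (arc_map f) (arcs G)"
    unfolding arc_map_eq_map_prod by (blast intro: map_prod_inj_on inj_on_subset)
  moreover have "arc_map f ` arcs G \<subseteq> arcs G"
    using subgraph_graph_image[OF assms(2), of G] assms(1)
    by (simp add: subgraph_def graph_image_def)
  moreover have "(`) (arc_map f) ` arcs ` copies G K = arcs ` graph_image f ` copies G K"
    by (simp add: image_image graph_image_def)
  ultimately show ?thesis
    using assms(2) by (simp add: set_system_symmetry_def graph_image_copies)
qed

lemma transversal_vertex_sets_of_copies:
  "transversal (verts G) (verts ` copies G K) X \<longleftrightarrow>
     X \<subseteq> verts G \<and> finite X \<and> (\<forall>H. subgraph H G \<and> isomorphic K H \<longrightarrow> verts H \<inter> X \<noteq> {})"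
  by (auto simp: transversal_def copies_def)

lemma transversal_arc_sets_of_copies:
  "transversal (arcs G) (arcs ` copies G K) X \<longleftrightarrow>
     X \<subseteq> arcs G \<and> finite X \<and> (\<forall>H. subgraph H G \<and> isomorphic K H \<longrightarrow> arcs H \<inter> X \<noteq> {})"
  by (auto simp: transversal_def copies_def)

lemma invariant_vertex_transversal_exists:
  assumes "finite_graph K" and "X \<subseteq> verts G" and "finite X"
    and "\<forall>H. subgraph H G \<and> isomorphic K H \<longrightarrow> verts H \<inter> X \<noteq> {}"
  shows "\<exists>Y. Y \<subseteq> verts G \<and> finite Y \<and> vertex_set_invariant G Y \<and>
    (\<forall>H. subgraph H G \<and> isomorphic K H \<longrightarrow> verts H \<inter> Y \<noteq> {}) \<and>
    card Y \<le> card X * card (verts K)"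
proof -
  have "\<forall>S\<in>verts ` copies G K. finite S \<and> card S \<le> card (verts K)"
    using card_copy[OF assms(1), where G = G] by auto
  moreover have "transversal (verts G) (verts ` copies G K) X"
    using assms(2-4) by (simp add: transversal_vertex_sets_of_copies)
  ultimately obtain Y where "transversal (verts G) (verts ` copies G K) Y"
    and "\<And>\<sigma>. set_system_symmetry (verts G) (verts ` copies G K) \<sigma> \<Longrightarrow> \<sigma> ` Y = Y"
    and "card Y \<le> card X * card (verts K)"
    by (rule invariant_transversal_exists) blast
  moreover from this have "vertex_set_invariant G Y"
    by (simp add: vertex_set_invariant_def automorphism_vertex_symmetry)
  ultimately show ?thesis
    unfolding transversal_vertex_sets_of_copies by blast
qed

lemma invariant_arc_transversal_exists:
  assumes "wf_graph G" and "finite_graph K" and "X \<subseteq> arcs G" and "finite X"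
    and "\<forall>H. subgraph H G \<and> isomorphic K H \<longrightarrow> arcs H \<inter> X \<noteq> {}"
  shows "\<exists>Y. Y \<subseteq> arcs G \<and> finite Y \<and> arc_set_invariant G Y \<and>
    (\<forall>H. subgraph H G \<and> isomorphic K H \<longrightarrow> arcs H \<inter> Y \<noteq> {}) \<and>
    card Y \<le> card X * card (arcs K)"
proof -
  have "\<forall>S\<in>arcs ` copies G K. finite S \<and> card S \<le> card (arcs K)"
    using card_copy[OF assms(2), where G = G] by auto
  moreover have "transversal (arcs G) (arcs ` copies G K) X"
    using assms(3-5) by (simp add: transversal_arc_sets_of_copies)
  ultimately obtain Y where "transversal (arcs G) (arcs ` copies G K) Y"
    and "\<And>\<sigma>. set_system_symmetry (arcs G) (arcs ` copies G K) \<sigma> \<Longrightarrow> \<sigma> ` Y = Y"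
    and "card Y \<le> card X * card (arcs K)"
    by (rule invariant_transversal_exists) blast
  moreover from this have "arc_set_invariant G Y"
    by (simp add: arc_set_invariant_def automorphism_arc_symmetry[OF assms(1)])
  ultimately show ?thesis
    unfolding transversal_arc_sets_of_copies by blast
qed

theorem corollary1:
  fixes \<Gamma> :: "'a graph" and K :: "'b graph"
  assumes "wf_graph \<Gamma>" and "finite_graph K"
  shows "(\<forall>X. X \<subseteq> verts \<Gamma> \<and> finite X \<and>
            (\<forall>H. subgraph H \<Gamma> \<and> isomorphic K H \<longrightarrow> verts H \<inter> X \<noteq> {}) \<longrightarrow>
          (\<exists>Y. Y \<subseteq> verts \<Gamma> \<and> finite Y \<and> vertex_set_invariant \<Gamma> Y \<and>
            (\<forall>H. subgraph H \<Gamma> \<and> isomorphic K H \<longrightarrow> verts H \<inter> Y \<noteq> {}) \<and>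
            card Y \<le> card X * card (verts K)))
    \<and> (\<forall>X. X \<subseteq> arcs \<Gamma> \<and> finite X \<and>
            (\<forall>H. subgraph H \<Gamma> \<and> isomorphic K H \<longrightarrow> arcs H \<inter> X \<noteq> {}) \<longrightarrow>
          (\<exists>Y. Y \<subseteq> arcs \<Gamma> \<and> finite Y \<and> arc_set_invariant \<Gamma> Y \<and>
            (\<forall>H. subgraph H \<Gamma> \<and> isomorphic K H \<longrightarrow> arcs H \<inter> Y \<noteq> {}) \<and>
            card Y \<le> card X * card (arcs K)))"
  by (intro conjI allI impI; elim conjE)
    (rule invariant_vertex_transversal_exists[OF assms(2)]
      invariant_arc_transversal_exists[OF assms]; assumption)+

end
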